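(* Let $X$ be a compact metric space and $G$ a uniformly equicontinuous group of homeomorphisms of $X$ generated (as a group) by a finite set $G_1$. Then the pseudogroup $\mathcal G(G)$ generated by $G$ has no $(\mathcal G(G),G_1)$-expansive Borel probability measures.
   Context: $\mathrm{Homeo}(X)$: homeomorphisms $g:D_g\to R_g$ between open subsets of $X$, composed on natural domains $D_{h\circ g}=g^{-1}(D_h)$. The pseudogroup generated by $\Gamma\subset\mathrm{Homeo}(X)$ is the set of $g\in\mathrm{Homeo}(X)$ such that each $x\in D_g$ has a neighborhood $U_x\subset D_g$ with $g|_{U_x}=g_1^{e_1}\circ\cdots\circ g_k^{e_k}|_{U_x}$ for some $g_i\in\Gamma$, $e_i\in\{\pm1\}$. $G$ is uniformly equicontinuous if for every $\varepsilon>0$ there is $\delta>0$ with $d(x,y)<\delta\Rightarrow d(g(x),g(y))<\varepsilon$ for all $g\in G$, $x,y\in X$. With generating set $G_1$: $\mathcal G_n=\{g_1\circ\cdots\circ g_n:g_i\in G_1\}$, $\mathcal G_n^x=\{g\in\mathcal G_n:x\in D_g\}$, $\Phi_\delta(x)=\{y\in X: d(g(x),g(y))\le\delta\ \forall n\in\mathbb N,\ \forall g\in\mathcal G_n^x\cap\mathcal G_n^y\}$. A Borel probability measure $\mu$ is $(\mathcal G(G),G_1)$-expansive if there is $\delta>0$ with $\mu(\Phi_\delta(x))=0$ for every $x\in X$. *)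

theory Defs
  imports "HOL-Analysis.Analysis" "HOL-Probability.Probability"
begin

text \<open>The space X is the whole of a type 'a (a metric space type whose universe is compact).
  G is a group of (global) homeomorphisms of X. The group generated by a set G1 of bijections:\<close>

inductive_set gen_group :: "('a \<Rightarrow> 'a) set \<Rightarrow> ('a \<Rightarrow> 'a) set" for G1 where
  gen_id: "id \<in> gen_group G1"
| gen_base: "g \<in> G1 \<Longrightarrow> g \<in> gen_group G1"
| gen_inv: "g \<in> G1 \<Longrightarrow> inv g \<in> gen_group G1"
| gen_comp: "g \<in> gen_group G1 \<Longrightarrow> h \<in> gen_group G1 \<Longrightarrow> g \<circ> h \<in> gen_group G1"

definition uniformly_equicontinuous :: "('a::metric_space \<Rightarrow> 'a) set \<Rightarrow> bool" where
  "uniformly_equicontinuous G \<longleftrightarrow>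
     (\<forall>e>0. \<exists>d>0. \<forall>g\<in>G. \<forall>x y. dist x y < d \<longrightarrow> dist (g x) (g y) < e)"

text \<open>Words of length n in G1: g_1 o ... o g_n with g_i in G1. Since the elements of G1 are
  globally defined homeomorphisms of X, their domains are all of X, so G_n^x = G_n.\<close>

definition words :: "('a \<Rightarrow> 'a) set \<Rightarrow> nat \<Rightarrow> ('a \<Rightarrow> 'a) set" where
  "words G1 n = {foldr (\<circ>) gs id | gs. set gs \<subseteq> G1 \<and> length gs = n}"

definition Phi :: "('a::metric_space \<Rightarrow> 'a) set \<Rightarrow> real \<Rightarrow> 'a \<Rightarrow> 'a set" where
  "Phi G1 \<delta> x = {y. \<forall>n. \<forall>g\<in>words G1 n. dist (g x) (g y) \<le> \<delta>}"

definition expansive_measure :: "'a::metric_space measure \<Rightarrow> ('a \<Rightarrow> 'a) set \<Rightarrow> bool" where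
  "expansive_measure \<mu> G1 \<longleftrightarrow> (\<exists>\<delta>>0. \<forall>x. emeasure \<mu> (Phi G1 \<delta> x) = 0)"

end

theory Submission
  imports Defs
begin

text \<open>Uniform equicontinuity of the group generated by G1 turns every \<delta> > 0 into a radius
  \<eta> > 0 with ball x \<eta> \<subseteq> Phi G1 \<delta> x for all x. By compactness finitely many balls of radius \<eta>
  cover X, so for any Borel probability measure some ball, and hence some Phi G1 \<delta> x, has
  positive measure.\<close>

lemma foldr_comp_Cons: "foldr (\<circ>) (g # gs) id = g \<circ> foldr (\<circ>) gs id"
  by simp

lemma foldr_comp_in_gen_group:
  assumes "set gs \<subseteq> G1"
  shows "foldr (\<circ>) gs id \<in> gen_group G1"
  using assms
proof (induction gs)
  case Nil
  show ?case using gen_group.gen_id[of G1] by (simp add: id_def)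
next
  case (Cons g gs)
  have "g \<in> gen_group G1"
    using Cons.prems by (simp add: gen_group.gen_base)
  moreover have "foldr (\<circ>) gs id \<in> gen_group G1"
    using Cons.prems by (intro Cons.IH) simp
  ultimately show ?case
    unfolding foldr_comp_Cons by (rule gen_group.gen_comp)
qed

lemma words_subset_gen_group: "words G1 n \<subseteq> gen_group G1"
  unfolding words_def using foldr_comp_in_gen_group by blast

lemma continuous_on_foldr_comp:
  assumes "\<forall>g\<in>set gs. continuous_on UNIV g"
  shows "continuous_on UNIV (foldr (\<circ>) gs id)"
  using assms
proof (induction gs)
  case Nil
  show ?case by (simp add: continuous_on_id)
next
  case (Cons g gs)
  have "continuous_on UNIV g"
    using Cons.prems by simp
  moreover have "continuous_on UNIV (foldr (\<circ>) gs id)"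
    using Cons.prems by (intro Cons.IH) simp
  ultimately show ?case
    unfolding foldr_comp_Cons
    using continuous_on_compose[of UNIV "foldr (\<circ>) gs id" g] continuous_on_subset[of UNIV g]
    by blast
qed

lemma continuous_on_words:
  assumes "\<forall>g\<in>G1. continuous_on UNIV g" "g \<in> words G1 n"
  shows "continuous_on UNIV g"
  using assms continuous_on_foldr_comp unfolding words_def by blast

lemma Phi_eq_INT: "Phi G1 \<delta> x = (\<Inter>n. \<Inter>g\<in>words G1 n. {y. dist (g x) (g y) \<le> \<delta>})"
  unfolding Phi_def by auto

lemma closed_Phi:
  assumes "\<forall>g\<in>G1. continuous_on UNIV g"
  shows "closed (Phi G1 \<delta> x)"
proof -
  have "closed {y. dist (g x) (g y) \<le> \<delta>}" if "g \<in> words G1 n" for g n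
    using continuous_on_words[OF assms that]
    by (intro closed_Collect_le continuous_on_dist continuous_on_const) auto
  then show ?thesis
    unfolding Phi_eq_INT by (simp add: closed_INT)
qed

lemma ball_subset_Phi:
  assumes "uniformly_equicontinuous (gen_group G1)" "\<delta> > 0"
  obtains \<eta> where "\<eta> > 0" "\<And>x. ball x \<eta> \<subseteq> Phi G1 \<delta> x"
proof -
  obtain \<eta> where "\<eta> > 0"
    and equi: "\<And>g x y. g \<in> gen_group G1 \<Longrightarrow> dist x y < \<eta> \<Longrightarrow> dist (g x) (g y) < \<delta>"
    using assms unfolding uniformly_equicontinuous_def by metis
  moreover have "ball x \<eta> \<subseteq> Phi G1 \<delta> x" for x
  proof
    fix y assume "y \<in> ball x \<eta>"
    then have "dist (g x) (g y) \<le> \<delta>" if "g \<in> words G1 n" for g n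
      using equi that words_subset_gen_group by (meson less_imp_le mem_ball subsetD)
    then show "y \<in> Phi G1 \<delta> x" unfolding Phi_def by blast
  qed
  ultimately show ?thesis using that by blast
qed

lemma prob_space_ex_ball_nonnull:
  fixes \<mu> :: "'a::metric_space measure"
  assumes "compact (UNIV :: 'a set)" "prob_space \<mu>" "sets \<mu> = sets borel" "\<eta> > 0"
  shows "\<exists>x. emeasure \<mu> (ball x \<eta>) \<noteq> 0"
proof (rule ccontr)
  assume "\<nexists>x. emeasure \<mu> (ball x \<eta>) \<noteq> 0"
  then have null: "\<And>x. emeasure \<mu> (ball x \<eta>) = 0" by blast
  obtain k :: "'a set" where k: "finite k" "UNIV \<subseteq> (\<Union>x\<in>k. ball x \<eta>)"
    using seq_compact_imp_totally_bounded[OF compact_imp_seq_compact[OF assms(1)]] assms(4)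
    by blast
  have balls: "ball x \<eta> \<in> sets \<mu>" for x
    using assms(3) by simp
  have "space \<mu> \<subseteq> (\<Union>x\<in>k. ball x \<eta>)"
    using k(2) by blast
  then have "emeasure \<mu> (space \<mu>) \<le> emeasure \<mu> (\<Union>x\<in>k. ball x \<eta>)"
    by (rule emeasure_mono) (use balls k(1) in blast)
  also have "\<dots> \<le> (\<Sum>x\<in>k. emeasure \<mu> (ball x \<eta>))"
    using k(1) balls by (intro emeasure_subadditive_finite) auto
  finally have "emeasure \<mu> (space \<mu>) = 0"
    by (simp add: null)
  then show False
    using prob_space.emeasure_space_1[OF assms(2)] by simp
qed

theorem mainTheorem17:
  fixes G1 G :: "('a::metric_space \<Rightarrow> 'a) set"
  assumes "compact (UNIV :: 'a set)"
    and "finite G1"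
    and "\<forall>g\<in>G1. \<exists>h. homeomorphism UNIV UNIV g h"
    and "G = gen_group G1"
    and "uniformly_equicontinuous G"
  shows "\<not> (\<exists>\<mu>. prob_space \<mu> \<and> sets \<mu> = sets (borel :: 'a measure) \<and> expansive_measure \<mu> G1)"
proof
  assume "\<exists>\<mu>. prob_space \<mu> \<and> sets \<mu> = sets (borel :: 'a measure) \<and> expansive_measure \<mu> G1"
  then obtain \<mu> :: "'a measure" and \<delta> where \<mu>: "prob_space \<mu>" "sets \<mu> = sets borel"
    and "\<delta> > 0" and null: "\<And>x. emeasure \<mu> (Phi G1 \<delta> x) = 0"
    unfolding expansive_measure_def by blast
  obtain \<eta> where "\<eta> > 0" and ball: "\<And>x. ball x \<eta> \<subseteq> Phi G1 \<delta> x"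
    using ball_subset_Phi assms(4,5) \<open>\<delta> > 0\<close> by blast
  obtain x where x: "emeasure \<mu> (ball x \<eta>) \<noteq> 0"
    using prob_space_ex_ball_nonnull[OF assms(1) \<mu> \<open>\<eta> > 0\<close>] by blast
  have "\<forall>g\<in>G1. continuous_on UNIV g"
    using assms(3) by (auto simp: homeomorphism_def)
  \<comment> \<open>needed because emeasure is 0 on non-measurable sets\<close>
  then have "Phi G1 \<delta> x \<in> sets \<mu>"
    using \<mu>(2) by (simp add: closed_Phi borel_closed)
  then have "emeasure \<mu> (ball x \<eta>) \<le> emeasure \<mu> (Phi G1 \<delta> x)"
    by (rule emeasure_mono[OF ball])
  with x show False
    by (simp add: null)
qed

end
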